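(* Let $k$ be an uncountable algebraically closed field and let $C_1,C_2$ be noncentral conjugacy classes of $G=SL_2(k)$. There exists $(x_1,x_2)\in C_1\times C_2$ such that $\langle x_1,x_2\rangle$ is Zariski dense in $G$ if and only if it is not the case that both $C_1$ and $C_2$ are classes of involutions modulo the center (i.e. classes whose images in $G/Z(G)$ consist of elements of order $2$). *)

theory Defs
  imports "HOL-Analysis.Analysis" "HOL-Computational_Algebra.Polynomial"
    "HOL-Algebra.Generated_Groups"
begin

definition SL2 :: "('k::field ^2^2) monoid" where
  "SL2 = \<lparr>carrier = {A. det A = 1}, mult = (\<lambda>A B. A ** B), one = mat 1\<rparr>"

definition grp_center :: "('a, 'b) monoid_scheme \<Rightarrow> 'a set" where
  "grp_center G = {z \<in> carrier G. \<forall>g \<in> carrier G. z \<otimes>\<^bsub>G\<^esub> g = g \<otimes>\<^bsub>G\<^esub> z}"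

definition conj_class :: "('a, 'b) monoid_scheme \<Rightarrow> 'a \<Rightarrow> 'a set" where
  "conj_class G x = {g \<otimes>\<^bsub>G\<^esub> x \<otimes>\<^bsub>G\<^esub> inv\<^bsub>G\<^esub> g | g. g \<in> carrier G}"

definition is_conj_class :: "('a, 'b) monoid_scheme \<Rightarrow> 'a set \<Rightarrow> bool" where
  "is_conj_class G C \<longleftrightarrow> (\<exists>x \<in> carrier G. C = conj_class G x)"

text \<open>A class of involutions modulo the center: every element has image of order 2
  in G/Z(G), i.e. it is not central but its square is central.\<close>
definition involution_mod_center_class :: "('a, 'b) monoid_scheme \<Rightarrow> 'a set \<Rightarrow> bool" where
  "involution_mod_center_class G C \<longleftrightarrow>
     (\<forall>x \<in> C. x \<notin> grp_center G \<and> x \<otimes>\<^bsub>G\<^esub> x \<in> grp_center G)"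

inductive_set matrix_poly_fun :: "('k::comm_ring_1 ^2^2 \<Rightarrow> 'k) set" where
  const: "(\<lambda>A. c) \<in> matrix_poly_fun"
| coord: "(\<lambda>A. A $ i $ j) \<in> matrix_poly_fun"
| add: "p \<in> matrix_poly_fun \<Longrightarrow> q \<in> matrix_poly_fun \<Longrightarrow> (\<lambda>A. p A + q A) \<in> matrix_poly_fun"
| mult: "p \<in> matrix_poly_fun \<Longrightarrow> q \<in> matrix_poly_fun \<Longrightarrow> (\<lambda>A. p A * q A) \<in> matrix_poly_fun"

definition zariski_dense_SL2 :: "('k::field ^2^2) set \<Rightarrow> bool" where
  "zariski_dense_SL2 S \<longleftrightarrow>
     (\<forall>p \<in> matrix_poly_fun. (\<forall>x \<in> S. p x = 0) \<longrightarrow> (\<forall>x \<in> carrier SL2. p x = 0))"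

end

theory Submission
  imports Defs "HOL-Library.Countable_Set"
begin

text \<open>A noncentral conjugacy class of \<open>SL\<^sub>2(k)\<close> is the set of all noncentral matrices of a given
  trace, and it consists of involutions modulo the center exactly when that trace is \<open>0\<close>.
  If \<open>x\<^sub>1, x\<^sub>2\<close> both have trace \<open>0\<close>, then \<open>x\<^sub>1\<^sup>2 = x\<^sub>2\<^sup>2 = -1\<close> and \<open>x\<^sub>1\<close> inverts \<open>y = x\<^sub>1 x\<^sub>2\<close> by
  conjugation, so \<open>\<langle>x\<^sub>1, x\<^sub>2\<rangle>\<close> lies in \<open>{\<alpha> + \<beta> y} \<union> {(\<alpha> + \<beta> y) x\<^sub>1}\<close>, on which the nonzero
  polynomial \<open>trace X \<cdot> [X, z]\<^sub>i\<^sub>j\<close> vanishes (\<open>z = y\<close>, or \<open>z = x\<^sub>1\<close> if \<open>y\<close> is scalar).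
  Otherwise, since \<open>k\<close> is uncountable, there is an \<open>l\<close> that is not a root of unity and avoids
  finitely many bad values, and \<open>x\<^sub>1, x\<^sub>2\<close> in the given classes with \<open>x\<^sub>1 x\<^sub>2 = diag(l, 1/l)\<close> and
  all entries of \<open>x\<^sub>1\<close> nonzero. The Zariski closure of \<open>\<langle>x\<^sub>1, x\<^sub>2\<rangle>\<close> then contains the powers of
  \<open>diag(l, 1/l)\<close>, hence the whole diagonal torus \<open>T\<close>, hence \<open>T x\<^sub>1 T x\<^sub>1\<^sup>-\<^sup>1 T\<close>, which contains
  every matrix with nonzero entries; these are dense in \<open>SL\<^sub>2\<close>.\<close>

lemma finite_roots_of_unity:
  assumes "n > 0"
  shows "finite {z::'k::field. z ^ n = 1}"
proof -
  have "coeff (monom 1 n - 1 :: 'k poly) n = 1"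
    using assms by simp
  then have "monom 1 n - 1 \<noteq> (0 :: 'k poly)"
    by (metis coeff_0 zero_neq_one)
  then have "finite {z. poly (monom 1 n - 1) z = (0::'k)}"
    by (rule poly_roots_finite)
  then show ?thesis
    by (simp add: poly_monom)
qed

lemma countable_roots_of_unity: "countable {z::'k::field. \<exists>n>0. z ^ n = 1}"
proof -
  have "{z::'k. \<exists>n>0. z ^ n = 1} = (\<Union>n\<in>{0<..}. {z. z ^ n = 1})"
    by auto
  also have "countable \<dots>"
    by (rule countable_UN) (auto intro: countable_finite finite_roots_of_unity)
  finally show ?thesis .
qed

definition mat2 :: "'a::zero \<Rightarrow> 'a \<Rightarrow> 'a \<Rightarrow> 'a \<Rightarrow> 'a^2^2" where
  "mat2 a b c d = (\<chi> i j. if i = 1 then (if j = 1 then a else b) else (if j = 1 then c else d))"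

lemma two_neq_one [simp]: "(2::2) \<noteq> 1" "(1::2) \<noteq> 2"
  by auto

lemma mat2_nth [simp]:
  "mat2 a b c d $ 1 $ 1 = a" "mat2 a b c d $ 1 $ 2 = b"
  "mat2 a b c d $ 2 $ 1 = c" "mat2 a b c d $ 2 $ 2 = d"
  by (simp_all add: mat2_def)

lemma mat2_eta: "A = mat2 (A$1$1) (A$1$2) (A$2$1) (A$2$2)"
  unfolding mat2_def vec_eq_iff by (simp add: forall_2)

lemma mat2_cases: obtains a b c d where "A = mat2 a b c d"
  using mat2_eta by blast

lemma mat2_eq_iff: "mat2 a b c d = mat2 a' b' c' d' \<longleftrightarrow> a = a' \<and> b = b' \<and> c = c' \<and> d = d'"
  by (metis mat2_nth)

lemma mat2_mult [simp]:
  "mat2 a b c d ** mat2 e f g h = mat2 (a*e + b*g) (a*f + b*h) (c*e + d*g) (c*f + d*h)"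
  by (subst mat2_eta) (simp add: matrix_matrix_mult_def sum_2)

lemma det_mat2 [simp]: "det (mat2 a b c d) = a*d - b*(c::'a::comm_ring_1)"
  by (simp add: det_2)

lemma mat_1_eq_mat2: "mat 1 = mat2 1 0 0 (1::'a::{zero,one})"
  by (subst mat2_eta) (simp add: mat_def)

definition adj2 :: "'a::comm_ring_1^2^2 \<Rightarrow> 'a^2^2" where
  "adj2 X = mat2 (X$2$2) (- X$1$2) (- X$2$1) (X$1$1)"

lemma adj2_mat2 [simp]: "adj2 (mat2 a b c d) = mat2 d (-b) (-c) a"
  by (simp add: adj2_def)

lemma det_adj2 [simp]: "det (adj2 X) = det X"
  by (cases X rule: mat2_cases) (simp add: algebra_simps)

lemma mult_adj2:
  assumes "det X = 1"
  shows "X ** adj2 X = mat 1" "adj2 X ** X = mat 1"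
  using assms by (cases X rule: mat2_cases, simp add: mat_1_eq_mat2 mat2_eq_iff algebra_simps)+

lemma adj2_adj2 [simp]: "adj2 (adj2 X) = X"
  by (cases X rule: mat2_cases) simp

lemma adj2_mat_1 [simp]: "adj2 (mat 1) = (mat 1 :: 'a::comm_ring_1^2^2)"
  by (simp add: mat_1_eq_mat2)

lemma adj2_mult: "adj2 (X ** Y) = adj2 Y ** adj2 X"
  by (cases X rule: mat2_cases, cases Y rule: mat2_cases) (simp add: mat2_eq_iff algebra_simps)

definition trace2 :: "'a::comm_ring_1^2^2 \<Rightarrow> 'a" where
  "trace2 X = X$1$1 + X$2$2"

definition scalar2 :: "'a::zero^2^2 \<Rightarrow> bool" where
  "scalar2 X \<longleftrightarrow> X$1$2 = 0 \<and> X$2$1 = 0 \<and> X$1$1 = X$2$2"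

lemma scalar2_commute: "scalar2 X \<Longrightarrow> X ** Y = Y ** (X::'a::comm_ring_1^2^2)"
  by (cases X rule: mat2_cases, cases Y rule: mat2_cases) (simp add: scalar2_def mat2_eq_iff mult.commute)

definition diag2 :: "'a::field \<Rightarrow> 'a^2^2" where
  "diag2 t = mat2 t 0 0 (inverse t)"

lemma det_diag2 [simp]: "t \<noteq> 0 \<Longrightarrow> det (diag2 t) = 1"
  by (simp add: diag2_def)

lemma diag2_mult: "diag2 s ** diag2 t = diag2 (s * t)"
  by (simp add: diag2_def mult.commute)

lemma diag2_1 [simp]: "diag2 1 = mat 1"
  by (simp add: diag2_def mat_1_eq_mat2)

lemma carrier_SL2 [simp]: "carrier SL2 = {A. det A = 1}"
  and mult_SL2 [simp]: "mult SL2 = (**)"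
  and one_SL2 [simp]: "one SL2 = mat 1"
  by (simp_all add: SL2_def)

lemma group_SL2: "group (SL2 :: ('k::field^2^2) monoid)"
proof (rule groupI)
  show "x \<otimes>\<^bsub>SL2\<^esub> y \<in> carrier SL2" if "x \<in> carrier SL2" "y \<in> carrier SL2" for x y :: "'k^2^2"
    using that by (simp add: det_mul)
  show "x \<otimes>\<^bsub>SL2\<^esub> y \<otimes>\<^bsub>SL2\<^esub> z = x \<otimes>\<^bsub>SL2\<^esub> (y \<otimes>\<^bsub>SL2\<^esub> z)" for x y z :: "'k^2^2"
    by (simp add: matrix_mul_assoc)
  show "\<exists>y\<in>carrier SL2. y \<otimes>\<^bsub>SL2\<^esub> x = \<one>\<^bsub>SL2\<^esub>" if "x \<in> carrier SL2" for x :: "'k^2^2"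
    using that mult_adj2 det_adj2 by fastforce
qed simp_all

lemma inv_SL2: "(X::'k::field^2^2) \<in> carrier SL2 \<Longrightarrow> inv\<^bsub>SL2\<^esub> X = adj2 X"
  by (rule group.inv_equality[OF group_SL2]) (auto simp: mult_adj2)

lemma conj_class_SL2_iff:
  "(x::'k::field^2^2) \<in> carrier SL2 \<Longrightarrow>
     B \<in> conj_class SL2 x \<longleftrightarrow> (\<exists>g. det g = 1 \<and> B = g ** x ** adj2 g)"
  unfolding conj_class_def by (force simp: inv_SL2)

lemma center_SL2_iff: "(X::'k::field^2^2) \<in> grp_center SL2 \<longleftrightarrow> det X = 1 \<and> scalar2 X"
proof
  assume X: "X \<in> grp_center SL2"
  then have "X ** mat2 1 1 0 1 = mat2 1 1 0 1 ** X" "X ** mat2 1 0 1 1 = mat2 1 0 1 1 ** X"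
    by (auto simp: grp_center_def)
  moreover have "det X = 1"
    using X by (simp add: grp_center_def)
  ultimately show "det X = 1 \<and> scalar2 X"
    by (subst (asm) (1 2 3 4) mat2_eta[of X]) (simp add: scalar2_def mat2_eq_iff)
next
  assume "det X = 1 \<and> scalar2 X"
  then show "X \<in> grp_center SL2"
    using scalar2_commute by (auto simp: grp_center_def)
qed

section \<open>Conjugacy classes of \<open>SL\<^sub>2\<close>\<close>

lemma conj_scalar2:
  fixes g x :: "'a::comm_ring_1^2^2"
  assumes "det g = 1" "scalar2 x"
  shows "g ** x ** adj2 g = x"
proof -
  have "g ** x ** adj2 g = x ** (g ** adj2 g)"
    using scalar2_commute[OF assms(2), of g] by (simp add: matrix_mul_assoc)
  then show ?thesis
    using mult_adj2(1)[OF assms(1)] by simp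
qed

lemma adj2_conj_cancel:
  fixes g x :: "'a::comm_ring_1^2^2"
  assumes "det g = 1"
  shows "adj2 g ** (g ** x ** adj2 g) ** g = x"
proof -
  have "adj2 g ** (g ** x ** adj2 g) ** g = (adj2 g ** g) ** x ** (adj2 g ** g)"
    by (simp add: matrix_mul_assoc)
  then show ?thesis
    using mult_adj2(2)[OF assms] by simp
qed

lemma trace2_conj_adj2: "trace2 (g ** x ** adj2 g) = det g * trace2 (x::'a::comm_ring_1^2^2)"
  by (cases g rule: mat2_cases, cases x rule: mat2_cases) (simp add: trace2_def algebra_simps)

lemma scalar2_conj_iff:
  fixes g x :: "'a::comm_ring_1^2^2"
  assumes "det g = 1"
  shows "scalar2 (g ** x ** adj2 g) \<longleftrightarrow> scalar2 x"
proof
  assume "scalar2 (g ** x ** adj2 g)"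
  moreover have "adj2 g ** (g ** x ** adj2 g) ** adj2 (adj2 g) = x"
    using adj2_conj_cancel[OF assms] by simp
  ultimately show "scalar2 x"
    using conj_scalar2[of "adj2 g" "g ** x ** adj2 g"] assms by simp
next
  assume "scalar2 x"
  then show "scalar2 (g ** x ** adj2 g)"
    using conj_scalar2[OF assms] by simp
qed

text \<open>Rescale \<open>P\<close> by a square root of its determinant.\<close>
lemma conj_SL2_of_intertwiner:
  fixes P C A :: "'k::alg_closed_field^2^2"
  assumes dP: "det P \<noteq> 0" and PC: "P ** C = A ** P"
  shows "\<exists>g. det g = 1 \<and> A = g ** C ** adj2 g"
proof -
  obtain \<sigma> where \<sigma>: "\<sigma>^2 = det P"
    using nth_root_exists[of 2 "det P"] by auto
  have \<sigma>nz: "\<sigma> \<noteq> 0"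
    using \<sigma> dP by auto
  obtain p11 p12 p21 p22 where P: "P = mat2 p11 p12 p21 p22"
    by (rule mat2_cases)
  define g where "g = mat2 (p11 / \<sigma>) (p12 / \<sigma>) (p21 / \<sigma>) (p22 / \<sigma>)"
  have dg: "det g = 1"
  proof -
    have "det g = (p11*p22 - p12*p21) / (\<sigma> * \<sigma>)"
      unfolding g_def by (simp add: diff_divide_distrib)
    also have "p11*p22 - p12*p21 = \<sigma> * \<sigma>"
      using \<sigma> P by (simp add: power2_eq_square)
    finally show ?thesis
      using \<sigma>nz by simp
  qed
  have gC: "g ** C = A ** g"
  proof -
    obtain c11 c12 c21 c22 where C: "C = mat2 c11 c12 c21 c22"
      by (rule mat2_cases)
    obtain a11 a12 a21 a22 where A: "A = mat2 a11 a12 a21 a22"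
      by (rule mat2_cases)
    have "p11 * c11 + p12 * c21 = a11 * p11 + a12 * p21"
         "p11 * c12 + p12 * c22 = a11 * p12 + a12 * p22"
         "p21 * c11 + p22 * c21 = a21 * p11 + a22 * p21"
         "p21 * c12 + p22 * c22 = a21 * p12 + a22 * p22"
      using PC unfolding P C A by (simp_all add: mat2_eq_iff)
    then show ?thesis
      unfolding g_def C A using \<sigma>nz by (simp add: mat2_eq_iff field_simps)
  qed
  have "A = A ** (g ** adj2 g)"
    using mult_adj2(1)[OF dg] by simp
  also have "\<dots> = g ** C ** adj2 g"
    by (simp add: matrix_mul_assoc gC)
  finally show ?thesis
    using dg by blast
qed

definition companion2 :: "'a::comm_ring_1 \<Rightarrow> 'a^2^2" where
  "companion2 \<tau> = mat2 0 (-1) 1 \<tau>"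

lemma det_companion2 [simp]: "det (companion2 \<tau>) = 1"
  and trace2_companion2 [simp]: "trace2 (companion2 \<tau>) = \<tau>"
  and not_scalar2_companion2 [simp]: "\<not> scalar2 (companion2 \<tau>)"
  by (simp_all add: companion2_def trace2_def scalar2_def)

lemma conj_companion2:
  fixes A :: "'k::alg_closed_field^2^2"
  assumes dA: "det A = 1" and ns: "\<not> scalar2 A"
  shows "\<exists>g. det g = 1 \<and> A = g ** companion2 (trace2 A) ** adj2 g"
proof -
  obtain p q r w where A: "A = mat2 p q r w"
    by (rule mat2_cases)
  have d: "p * w - q * r = 1"
    using dA A by simp
  consider "r \<noteq> 0" | "r = 0" "q \<noteq> 0" | "r = 0" "q = 0" "p \<noteq> w"
    using ns A by (auto simp: scalar2_def)
  then obtain P where "det P \<noteq> 0" "P ** companion2 (trace2 A) = A ** P"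
  proof cases
    case 1
    have "mat2 1 p 0 r ** companion2 (trace2 A) = A ** mat2 1 p 0 r"
      unfolding A companion2_def trace2_def using d
      by (simp add: mat2_eq_iff; intro conjI; ((simp add: algebra_simps; fail) | algebra))
    then show ?thesis
      using 1 that[of "mat2 1 p 0 r"] by simp
  next
    case 2
    then have "mat2 0 q 1 w ** companion2 (trace2 A) = A ** mat2 0 q 1 w"
      unfolding A companion2_def trace2_def using d by (simp add: mat2_eq_iff algebra_simps)
    then show ?thesis
      using 2 that[of "mat2 0 q 1 w"] by simp
  next
    case 3
    then have "mat2 1 p 1 w ** companion2 (trace2 A) = A ** mat2 1 p 1 w"
      unfolding A companion2_def trace2_def using d by (simp add: mat2_eq_iff algebra_simps)
    then show ?thesis
      using 3 that[of "mat2 1 p 1 w"] by simp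
  qed
  then show ?thesis
    by (rule conj_SL2_of_intertwiner)
qed

definition SL2_trace_class :: "'a::comm_ring_1 \<Rightarrow> ('a^2^2) set" where
  "SL2_trace_class \<tau> = {x. det x = 1 \<and> \<not> scalar2 x \<and> trace2 x = \<tau>}"

lemma conj_class_SL2_eq_trace_class:
  fixes x :: "'k::alg_closed_field^2^2"
  assumes dx: "det x = 1" and ns: "\<not> scalar2 x"
  shows "conj_class SL2 x = SL2_trace_class (trace2 x)"
proof (rule equalityI; rule subsetI)
  fix y assume "y \<in> conj_class SL2 x"
  then obtain g where "det g = 1" "y = g ** x ** adj2 g"
    using dx conj_class_SL2_iff[of x y] by auto
  then show "y \<in> SL2_trace_class (trace2 x)"
    using dx ns by (simp add: SL2_trace_class_def det_mul trace2_conj_adj2 scalar2_conj_iff)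
next
  fix y assume "y \<in> SL2_trace_class (trace2 x)"
  then have dy: "det y = 1" and ns_y: "\<not> scalar2 y" and tr: "trace2 y = trace2 x"
    by (auto simp: SL2_trace_class_def)
  define C where "C = companion2 (trace2 x)"
  obtain g where g: "det g = 1" "x = g ** C ** adj2 g"
    using conj_companion2[OF dx ns] unfolding C_def by blast
  obtain h where h: "det h = 1" "y = h ** C ** adj2 h"
    using conj_companion2[OF dy ns_y] tr unfolding C_def by metis
  define k where "k = h ** adj2 g"
  have "k ** x ** adj2 k = h ** (adj2 g ** x ** g) ** adj2 h"
    by (simp add: k_def adj2_mult matrix_mul_assoc)
  also have "adj2 g ** x ** g = C"
    unfolding g(2) by (rule adj2_conj_cancel[OF g(1)])
  finally have "y = k ** x ** adj2 k"
    using h(2) by simp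
  moreover have "det k = 1"
    using g(1) h(1) by (simp add: k_def det_mul)
  ultimately show "y \<in> conj_class SL2 x"
    using dx by (auto simp: conj_class_SL2_iff)
qed

lemma noncentral_conj_class_SL2:
  fixes C :: "('k::alg_closed_field^2^2) set"
  assumes "is_conj_class SL2 C" "\<not> C \<subseteq> grp_center SL2"
  obtains \<tau> where "C = SL2_trace_class \<tau>"
proof -
  obtain x where x: "det x = 1" "C = conj_class SL2 x"
    using assms(1) unfolding is_conj_class_def by auto
  have "\<not> scalar2 x"
  proof
    assume "scalar2 x"
    then have "C = {x}"
      using x conj_scalar2 by (auto simp: conj_class_SL2_iff intro!: exI[of _ "mat 1"])
    then show False
      using assms(2) x(1) \<open>scalar2 x\<close> by (simp add: center_SL2_iff)
  qed
  then show ?thesis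
    using that x conj_class_SL2_eq_trace_class by blast
qed

section \<open>Involutions modulo the center\<close>

lemma traceless_square:
  fixes X :: "'k::comm_ring_1^2^2"
  assumes "det X = 1" "trace2 X = 0"
  shows "X ** X = mat2 (-1) 0 0 (-1)"
proof (cases X rule: mat2_cases)
  case (1 a b c d)
  then have "d = -a" "a*d - b*c = 1"
    using assms by (simp_all add: trace2_def add_eq_0_iff)
  moreover have "a*a + b*c = - (a*d - b*c)" if "d = -a"
    using that by (simp add: algebra_simps)
  ultimately show ?thesis
    using 1 by (simp add: mat2_eq_iff algebra_simps)
qed

lemma traceless_if_square_scalar2:
  fixes X :: "'k::field^2^2"
  assumes "\<not> scalar2 X" "scalar2 (X ** X)"
  shows "trace2 X = 0"
proof (cases X rule: mat2_cases)
  case (1 a b c d)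
  have "b * (a + d) = 0" "c * (a + d) = 0" "(a - d) * (a + d) = 0"
    using assms(2) 1 by (simp_all add: scalar2_def algebra_simps)
  then show ?thesis
    using assms(1) 1 by (auto simp: scalar2_def trace2_def)
qed

lemma involution_mod_center_class_SL2_trace_class_iff:
  "involution_mod_center_class SL2 (SL2_trace_class \<tau>) \<longleftrightarrow> \<tau> = (0::'k::field)"
proof
  assume "involution_mod_center_class SL2 (SL2_trace_class \<tau>)"
  moreover have "companion2 \<tau> \<in> SL2_trace_class \<tau>"
    by (simp add: SL2_trace_class_def)
  ultimately have "scalar2 (companion2 \<tau> ** companion2 \<tau>)"
    by (simp add: involution_mod_center_class_def center_SL2_iff)
  then show "\<tau> = 0"
    using traceless_if_square_scalar2[of "companion2 \<tau>"] by simp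
next
  assume "\<tau> = 0"
  then have "x ** x = mat2 (-1) 0 0 (-1)" if "x \<in> SL2_trace_class \<tau>" for x
    using that traceless_square by (auto simp: SL2_trace_class_def)
  then show "involution_mod_center_class SL2 (SL2_trace_class \<tau>)"
    by (auto simp: involution_mod_center_class_def center_SL2_iff SL2_trace_class_def scalar2_def det_mul)
qed

section \<open>Zariski closure in the space of \<open>2 \<times> 2\<close> matrices\<close>

definition zariski_closure :: "('k::comm_ring_1^2^2) set \<Rightarrow> ('k^2^2) set" where
  "zariski_closure H = {X. \<forall>p\<in>matrix_poly_fun. (\<forall>x\<in>H. p x = 0) \<longrightarrow> p X = 0}"

lemma zariski_dense_SL2_iff_closure:
  "zariski_dense_SL2 H \<longleftrightarrow> {X. det X = 1} \<subseteq> zariski_closure (H :: ('k::field^2^2) set)"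
  by (auto simp: zariski_dense_SL2_def zariski_closure_def)

lemma subset_zariski_closure: "H \<subseteq> zariski_closure H"
  by (auto simp: zariski_closure_def)

lemma zariski_closure_subset_closure:
  "A \<subseteq> zariski_closure H \<Longrightarrow> zariski_closure A \<subseteq> zariski_closure H"
  unfolding zariski_closure_def by blast

lemma matrix_poly_fun_comp_curve:
  fixes F :: "'a \<Rightarrow> 'k::comm_ring_1^2^2"
  assumes "p \<in> matrix_poly_fun"
    and const: "\<And>c. (\<lambda>t. c) \<in> S"
    and add: "\<And>f g. f \<in> S \<Longrightarrow> g \<in> S \<Longrightarrow> (\<lambda>t. f t + g t) \<in> S"
    and mult: "\<And>f g. f \<in> S \<Longrightarrow> g \<in> S \<Longrightarrow> (\<lambda>t. f t * g t) \<in> S"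
    and entries: "\<And>i j. (\<lambda>t. F t $ i $ j) \<in> S"
  shows "(\<lambda>t. p (F t)) \<in> S"
  using assms(1) by induction (simp_all add: const add mult entries)

lemma matrix_poly_fun_diff:
  assumes "p \<in> matrix_poly_fun" "q \<in> matrix_poly_fun"
  shows "(\<lambda>X. p X - q X) \<in> matrix_poly_fun"
proof -
  have "(\<lambda>X. p X + (\<lambda>X. -1) X * q X) \<in> matrix_poly_fun"
    by (intro matrix_poly_fun.intros assms)
  then show ?thesis
    by simp
qed

lemma matrix_poly_fun_mult_entry:
  "(\<lambda>X. (A ** X) $ i $ j) \<in> matrix_poly_fun" "(\<lambda>X. (X ** A) $ i $ j) \<in> matrix_poly_fun"
  by (simp_all add: matrix_matrix_mult_def sum_2)
    (intro matrix_poly_fun.intros)+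

lemma matrix_poly_fun_comp:
  "p \<in> matrix_poly_fun \<Longrightarrow> (\<And>i j. (\<lambda>X. F X $ i $ j) \<in> matrix_poly_fun)
     \<Longrightarrow> (\<lambda>X. p (F X)) \<in> matrix_poly_fun"
  by (rule matrix_poly_fun_comp_curve) (auto intro: matrix_poly_fun.intros)

lemma zariski_closure_image_subset:
  assumes "\<And>i j. (\<lambda>X. F X $ i $ j) \<in> matrix_poly_fun"
    and "F ` H \<subseteq> zariski_closure G"
  shows "F ` zariski_closure H \<subseteq> zariski_closure G"
proof (clarsimp simp: zariski_closure_def)
  fix X p
  assume X: "\<forall>q\<in>matrix_poly_fun. (\<forall>x\<in>H. q x = 0) \<longrightarrow> q X = 0"
    and p: "p \<in> matrix_poly_fun" and p0: "\<forall>x\<in>G. p x = 0"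
  have "(\<lambda>X. p (F X)) \<in> matrix_poly_fun"
    using matrix_poly_fun_comp[OF p assms(1)] .
  moreover have "\<forall>x\<in>H. p (F x) = 0"
    using assms(2) p p0 unfolding zariski_closure_def by blast
  ultimately show "p (F X) = 0"
    using X[THEN bspec, of "\<lambda>X. p (F X)"] by simp
qed

lemma zariski_closure_mult_closed:
  assumes closed: "\<And>u v. u \<in> H \<Longrightarrow> v \<in> H \<Longrightarrow> u ** v \<in> H"
    and X: "X \<in> zariski_closure H" and Y: "Y \<in> zariski_closure H"
  shows "X ** Y \<in> zariski_closure H"
proof -
  have left: "(**) u ` zariski_closure H \<subseteq> zariski_closure H" if "u \<in> H" for u
  proof (rule zariski_closure_image_subset)
    show "(**) u ` H \<subseteq> zariski_closure H"
      using closed[OF that] subset_zariski_closure[of H] by (auto simp: image_subset_iff)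
  qed (rule matrix_poly_fun_mult_entry)
  have "(\<lambda>u. u ** Y) ` H \<subseteq> zariski_closure H"
    using left Y by (auto simp: image_subset_iff)
  then have "(\<lambda>u. u ** Y) ` zariski_closure H \<subseteq> zariski_closure H"
    by (rule zariski_closure_image_subset[rotated]) (rule matrix_poly_fun_mult_entry)
  then show ?thesis
    using X by blast
qed

definition laurent_funs :: "('k::field \<Rightarrow> 'k) set" where
  "laurent_funs = {f. \<exists>q N. \<forall>t. t \<noteq> 0 \<longrightarrow> t ^ N * f t = poly q t}"

lemma laurent_funs_const: "(\<lambda>t. c) \<in> laurent_funs"
  unfolding laurent_funs_def by (intro CollectI exI[of _ "[:c:]"] exI[of _ 0]) simp

lemma laurent_funs_id: "(\<lambda>t. t) \<in> laurent_funs"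
  unfolding laurent_funs_def by (intro CollectI exI[of _ "[:0, 1:]"] exI[of _ 0]) simp

lemma laurent_funs_inverse: "inverse \<in> laurent_funs"
  unfolding laurent_funs_def by (intro CollectI exI[of _ 1] exI[of _ 1]) simp

lemma laurent_funs_add:
  assumes "f \<in> laurent_funs" "g \<in> laurent_funs"
  shows "(\<lambda>t. f t + g t) \<in> laurent_funs"
proof -
  obtain p M where p: "\<And>t. t \<noteq> 0 \<Longrightarrow> t ^ M * f t = poly p t"
    using assms(1) by (auto simp: laurent_funs_def)
  obtain q N where q: "\<And>t. t \<noteq> 0 \<Longrightarrow> t ^ N * g t = poly q t"
    using assms(2) by (auto simp: laurent_funs_def)
  have "t ^ (M + N) * (f t + g t) = poly (monom 1 N * p + monom 1 M * q) t" if "t \<noteq> 0" for t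
  proof -
    have "t ^ (M + N) * (f t + g t) = t ^ N * (t ^ M * f t) + t ^ M * (t ^ N * g t)"
      by (simp add: power_add algebra_simps)
    also have "\<dots> = poly (monom 1 N * p + monom 1 M * q) t"
      using p q that by (simp add: poly_monom)
    finally show ?thesis .
  qed
  then show ?thesis
    unfolding laurent_funs_def by blast
qed

lemma laurent_funs_mult:
  assumes "f \<in> laurent_funs" "g \<in> laurent_funs"
  shows "(\<lambda>t. f t * g t) \<in> laurent_funs"
proof -
  obtain p M where p: "\<And>t. t \<noteq> 0 \<Longrightarrow> t ^ M * f t = poly p t"
    using assms(1) by (auto simp: laurent_funs_def)
  obtain q N where q: "\<And>t. t \<noteq> 0 \<Longrightarrow> t ^ N * g t = poly q t"
    using assms(2) by (auto simp: laurent_funs_def)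
  have "t ^ (M + N) * (f t * g t) = poly (p * q) t" if "t \<noteq> 0" for t
  proof -
    have "t ^ (M + N) * (f t * g t) = (t ^ M * f t) * (t ^ N * g t)"
      by (simp add: power_add algebra_simps)
    also have "\<dots> = poly (p * q) t"
      using p q that by simp
    finally show ?thesis .
  qed
  then show ?thesis
    unfolding laurent_funs_def by blast
qed

lemma laurent_curve_in_zariski_closure:
  fixes F :: "'k::field \<Rightarrow> 'k^2^2"
  assumes entries: "\<And>i j. (\<lambda>t. F t $ i $ j) \<in> laurent_funs"
    and inf: "infinite {t. t \<noteq> 0 \<and> F t \<in> H}" and "t \<noteq> 0"
  shows "F t \<in> zariski_closure H"
  unfolding zariski_closure_def
proof (intro CollectI ballI impI)
  fix p assume p: "p \<in> matrix_poly_fun" and p0: "\<forall>x\<in>H. p x = 0"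
  have "(\<lambda>t. p (F t)) \<in> laurent_funs"
    using p laurent_funs_const laurent_funs_add laurent_funs_mult entries
    by (rule matrix_poly_fun_comp_curve)
  then obtain q N where q: "\<And>t. t \<noteq> 0 \<Longrightarrow> t ^ N * p (F t) = poly q t"
    by (auto simp: laurent_funs_def)
  have "{t. t \<noteq> 0 \<and> F t \<in> H} \<subseteq> {t. poly q t = 0}"
    using q p0 by force
  then have "q = 0"
    using inf poly_roots_finite finite_subset by blast
  then show "p (F t) = 0"
    using q[OF \<open>t \<noteq> 0\<close>] \<open>t \<noteq> 0\<close> by simp
qed

lemma poly_curve_in_zariski_closure:
  fixes F :: "'k::field \<Rightarrow> 'k^2^2"
  assumes entries: "\<And>i j. (\<lambda>t. F t $ i $ j) \<in> range poly"
    and inf: "infinite {t. F t \<in> H}"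
  shows "F t \<in> zariski_closure H"
  unfolding zariski_closure_def
proof (intro CollectI ballI impI)
  fix p assume p: "p \<in> matrix_poly_fun" and p0: "\<forall>x\<in>H. p x = 0"
  have const: "(\<lambda>t. c) \<in> range poly" for c :: 'k
    by (rule range_eqI[of _ _ "[:c:]"]) (simp add: fun_eq_iff)
  have add: "(\<lambda>t. f t + g t) \<in> range poly" if "f = poly a" "g = poly b" for f g :: "'k \<Rightarrow> 'k" and a b
    using that by (intro range_eqI[of _ _ "a + b"]) (simp add: fun_eq_iff)
  have mult: "(\<lambda>t. f t * g t) \<in> range poly" if "f = poly a" "g = poly b" for f g :: "'k \<Rightarrow> 'k" and a b
    using that by (intro range_eqI[of _ _ "a * b"]) (simp add: fun_eq_iff)
  have "(\<lambda>t. p (F t)) \<in> range poly"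
    using p const _ _ entries by (rule matrix_poly_fun_comp_curve) (auto intro: add mult)
  then obtain q where q: "\<And>t. p (F t) = poly q t"
    by (metis rangeE)
  have "{t. F t \<in> H} \<subseteq> {t. poly q t = 0}"
    using q p0 by force
  then have "q = 0"
    using inf poly_roots_finite finite_subset by blast
  then show "p (F t) = 0"
    using q by simp
qed

lemma inj_power_if_not_root_of_unity:
  fixes l :: "'k::field"
  assumes "l \<noteq> 0" "\<And>n. n > 0 \<Longrightarrow> l ^ n \<noteq> 1"
  shows "inj (\<lambda>n. l ^ n)"
proof (rule linorder_injI)
  fix n m :: nat
  assume "n < m"
  then have "l ^ m = l ^ n * l ^ (m - n)"
    by (simp flip: power_add)
  then show "l ^ n \<noteq> l ^ m"
    using assms \<open>n < m\<close> by force
qed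

lemma diag2_in_zariski_closure_powers:
  fixes l t :: "'k::field"
  assumes l: "l \<noteq> 0" "\<And>n. n > 0 \<Longrightarrow> l ^ n \<noteq> 1" and "t \<noteq> 0"
  shows "diag2 t \<in> zariski_closure (range (\<lambda>n. diag2 (l ^ n)))"
proof (rule laurent_curve_in_zariski_closure[OF _ _ \<open>t \<noteq> 0\<close>])
  show "(\<lambda>t. diag2 t $ i $ j) \<in> laurent_funs" for i j
    using exhaust_2[of i] exhaust_2[of j]
    by (auto simp: diag2_def laurent_funs_id laurent_funs_const laurent_funs_inverse)
  have "range (\<lambda>n. l ^ n) \<subseteq> {t. t \<noteq> 0 \<and> diag2 t \<in> range (\<lambda>n. diag2 (l ^ n))}"
    using l(1) by auto
  moreover have "infinite (range (\<lambda>n. l ^ n))"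
    using range_inj_infinite[OF inj_power_if_not_root_of_unity[OF l]] .
  ultimately show "infinite {t. t \<noteq> 0 \<and> diag2 t \<in> range (\<lambda>n. diag2 (l ^ n))}"
    using finite_subset by blast
qed

definition all_entries_nonzero :: "'a::zero^2^2 \<Rightarrow> bool" where
  "all_entries_nonzero X \<longleftrightarrow> X$1$1 \<noteq> 0 \<and> X$1$2 \<noteq> 0 \<and> X$2$1 \<noteq> 0 \<and> X$2$2 \<noteq> 0"

text \<open>Every \<open>X\<close> in \<open>SL\<^sub>2\<close> lies on the polynomial curve \<open>t \<mapsto> X (1 + t\<^sup>2, t; t, 1)\<close>
  of \<open>SL\<^sub>2\<close>, whose entries are nonzero polynomials in \<open>t\<close> and hence vanish only finitely often.\<close>
lemma SL2_subset_zariski_closure_all_entries_nonzero: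
  assumes "infinite (UNIV :: 'k::field set)"
  shows "{X. det X = 1} \<subseteq> zariski_closure {X::'k^2^2. det X = 1 \<and> all_entries_nonzero X}"
proof
  fix X :: "'k^2^2"
  assume "X \<in> {X. det X = 1}"
  then have dX: "det X = 1"
    by simp
  define F where "F t = X ** mat2 (1 + t*t) t t 1" for t
  define P where "P i j = (if j = 1 then [:X$i$1, X$i$2, X$i$1:] else [:X$i$2, X$i$1:])" for i j :: 2
  have F_entry: "F t $ i $ j = poly (P i j) t" for t i j
    using exhaust_2[of i] exhaust_2[of j]
    by (cases X rule: mat2_cases) (auto simp: F_def P_def algebra_simps)
  have "X$i$1 \<noteq> 0 \<or> X$i$2 \<noteq> 0" for i
    using dX exhaust_2[of i] by (auto simp: det_2)
  then have P_nz: "P i j \<noteq> 0" for i j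
    by (auto simp: P_def)
  have "{t. \<not> all_entries_nonzero (F t)} \<subseteq> (\<Union>i j. {t. poly (P i j) t = 0})"
    by (auto simp: all_entries_nonzero_def F_entry)
  moreover have "finite (\<Union>i j. {t. poly (P i j) t = 0})"
    using poly_roots_finite[OF P_nz] by simp
  ultimately have "finite {t. \<not> all_entries_nonzero (F t)}"
    by (rule finite_subset)
  moreover have "det (F t) = 1" for t
    using dX by (simp add: F_def det_mul)
  ultimately have "infinite (UNIV - {t. \<not> all_entries_nonzero (F t)})"
    "{t. F t \<in> {X. det X = 1 \<and> all_entries_nonzero X}} = UNIV - {t. \<not> all_entries_nonzero (F t)}"
    using assms Diff_infinite_finite by auto
  then have "infinite {t. F t \<in> {X. det X = 1 \<and> all_entries_nonzero X}}"
    by simp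
  moreover have "(\<lambda>t. F t $ i $ j) \<in> range poly" for i j
    by (simp add: F_entry)
  ultimately have "F 0 \<in> zariski_closure {X. det X = 1 \<and> all_entries_nonzero X}"
    by (intro poly_curve_in_zariski_closure)
  then show "X \<in> zariski_closure {X. det X = 1 \<and> all_entries_nonzero X}"
    by (simp add: F_def flip: mat_1_eq_mat2)
qed

section \<open>Double cosets of the diagonal torus\<close>

lemma diag2_mult_mult_diag2:
  "diag2 t ** mat2 p q r w ** diag2 u
     = mat2 (t * u * p) (t * inverse u * q) (inverse t * u * r) (inverse t * inverse u * w)"
  by (simp add: diag2_def mat2_eq_iff algebra_simps)

lemma exists_diag2_scaling:
  fixes E X :: "'k::alg_closed_field^2^2"
  assumes dE: "det E = 1" and dX: "det X = 1" and X: "all_entries_nonzero X"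
    and E12: "E$1$2 \<noteq> 0" and diag: "E$1$1 * E$2$2 = X$1$1 * X$2$2"
  obtains t u where "t \<noteq> 0" "u \<noteq> 0" "diag2 t ** E ** diag2 u = X"
proof -
  obtain p q r w where E: "E = mat2 p q r w"
    by (rule mat2_cases)
  obtain x11 x12 x21 x22 where X_eq: "X = mat2 x11 x12 x21 x22"
    by (rule mat2_cases)
  have x_nz: "x11 \<noteq> 0" "x12 \<noteq> 0" "x21 \<noteq> 0" "x22 \<noteq> 0"
    using X by (simp_all add: X_eq all_entries_nonzero_def)
  have pw: "p * w = x11 * x22" and qnz: "q \<noteq> 0"
    using diag E12 by (simp_all add: E X_eq)
  then have pnz: "p \<noteq> 0"
    using x_nz by auto
  have qr: "q * r = x12 * x21"
    using dE dX pw by (simp add: E X_eq) algebra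
  define \<alpha> where "\<alpha> = x11 / p"
  define \<beta> where "\<beta> = x12 / q"
  have \<alpha>\<beta>_nz: "\<alpha> \<noteq> 0" "\<beta> \<noteq> 0"
    using pnz qnz x_nz by (simp_all add: \<alpha>_def \<beta>_def)
  obtain t where t: "t^2 = \<alpha> * \<beta>"
    using nth_root_exists[of 2 "\<alpha> * \<beta>"] by auto
  have tnz: "t \<noteq> 0"
    using t \<alpha>\<beta>_nz by auto
  define u where "u = t / \<beta>"
  have unz: "u \<noteq> 0"
    using tnz \<alpha>\<beta>_nz by (simp add: u_def)
  have tu: "t * u = \<alpha>"
    using t \<alpha>\<beta>_nz by (simp add: u_def power2_eq_square)
  then have itu: "inverse t * inverse u = inverse \<alpha>"
    by (metis inverse_mult_distrib)
  have tiu: "t * inverse u = \<beta>" and itu': "inverse t * u = inverse \<beta>"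
    using tnz \<alpha>\<beta>_nz by (simp_all add: u_def field_simps)
  have "diag2 t ** E ** diag2 u = X"
    unfolding E X_eq diag2_mult_mult_diag2 tu itu tiu itu' mat2_eq_iff
    using pnz qnz x_nz pw qr by (simp add: \<alpha>_def \<beta>_def field_simps)
  with tnz unz show ?thesis
    by (rule that)
qed

lemma conj_diag2_mat2:
  "mat2 a b c d ** diag2 s ** adj2 (mat2 a b c d)
     = mat2 (a * d * s - b * c * inverse s) (a * b * (inverse s - s)) (c * d * (s - inverse s))
         (a * d * inverse s - b * c * s)"
  by (simp add: diag2_def mat2_eq_iff algebra_simps)

text \<open>The diagonal product of \<open>g diag(s, 1/s) g\<^sup>-\<^sup>1\<close> is \<open>A\<^sup>2 + B\<^sup>2 - AB(s\<^sup>2 + s\<^sup>-\<^sup>2)\<close>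
  with \<open>A = g\<^sub>1\<^sub>1 g\<^sub>2\<^sub>2\<close>, \<open>B = g\<^sub>1\<^sub>2 g\<^sub>2\<^sub>1\<close>; prescribing it to be \<open>P\<close> is a quartic in \<open>s\<close>.\<close>
lemma exists_conj_diag2_diagonal_product:
  fixes g :: "'k::alg_closed_field^2^2"
  assumes dg: "det g = 1" and g: "all_entries_nonzero g" and P: "P \<noteq> 0" "P \<noteq> 1"
  obtains s where "s \<noteq> 0"
    "(g ** diag2 s ** adj2 g)$1$1 * (g ** diag2 s ** adj2 g)$2$2 = P"
    "(g ** diag2 s ** adj2 g)$1$2 \<noteq> 0"
proof -
  obtain a b c d where g_eq: "g = mat2 a b c d"
    by (rule mat2_cases)
  define A where "A = a * d"
  define B where "B = b * c"
  have AB: "A * B \<noteq> 0" "A - B = 1"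
    using g dg by (simp_all add: g_eq all_entries_nonzero_def A_def B_def)
  define Q where "Q = [:A * B, 0, - (A*A + B*B - P), 0, A * B:]"
  have "degree Q = 4"
    using AB by (simp add: Q_def)
  then obtain s where "poly Q s = 0"
    using alg_closed_imp_poly_has_root[of Q] by auto
  then have quartic: "A * B * s^4 - (A*A + B*B - P) * s^2 + A * B = 0"
    by (simp add: Q_def algebra_simps eval_nat_numeral)
  have snz: "s \<noteq> 0"
    using quartic AB by auto
  define i where "i = inverse s"
  have si: "s * i = 1"
    using snz by (simp add: i_def)
  have diag: "(A * s - B * i) * (A * i - B * s) = P"
    using si quartic by algebra
  have "i \<noteq> s"
  proof
    assume "i = s"
    then have "s^2 = 1"
      using si by (simp add: power2_eq_square)
    then have "(A - B) * (A - B) = P"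
      using quartic by algebra
    then show False
      using AB P by simp
  qed
  then have E12: "a * b * (i - s) \<noteq> 0"
    using g by (simp add: g_eq all_entries_nonzero_def)
  have E: "g ** diag2 s ** adj2 g = mat2 (A * s - B * i) (a * b * (i - s)) (c * d * (s - i)) (A * i - B * s)"
    unfolding g_eq conj_diag2_mat2 A_def B_def i_def by (simp add: mat2_eq_iff algebra_simps)
  show ?thesis
    by (rule that[OF snz]) (simp_all only: E mat2_nth diag E12 not_False_eq_True)
qed

lemma all_entries_nonzero_in_torus_double_coset:
  fixes K :: "('k::alg_closed_field^2^2) set"
  assumes closed: "\<And>u v. u \<in> K \<Longrightarrow> v \<in> K \<Longrightarrow> u ** v \<in> K"
    and torus: "\<And>t. t \<noteq> 0 \<Longrightarrow> diag2 t \<in> K"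
    and gK: "g \<in> K" "adj2 g \<in> K" and dg: "det g = 1" and g: "all_entries_nonzero g"
    and dX: "det X = 1" and X: "all_entries_nonzero X"
  shows "X \<in> K"
proof -
  have "X$1$1 * X$2$2 - 1 = X$1$2 * X$2$1"
    using dX unfolding det_2 by algebra
  then have P: "X$1$1 * X$2$2 \<noteq> 0" "X$1$1 * X$2$2 \<noteq> 1"
    using X by (auto simp: all_entries_nonzero_def)
  obtain s where s: "s \<noteq> 0"
    "(g ** diag2 s ** adj2 g)$1$1 * (g ** diag2 s ** adj2 g)$2$2 = X$1$1 * X$2$2"
    "(g ** diag2 s ** adj2 g)$1$2 \<noteq> 0"
    using exists_conj_diag2_diagonal_product[OF dg g P] .
  have "det (g ** diag2 s ** adj2 g) = 1"
    using dg s(1) by (simp add: det_mul)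
  then obtain t u where "t \<noteq> 0" "u \<noteq> 0" "diag2 t ** (g ** diag2 s ** adj2 g) ** diag2 u = X"
    using exists_diag2_scaling[OF _ dX X s(3,2)] by blast
  moreover have "diag2 t ** (g ** diag2 s ** adj2 g) ** diag2 u \<in> K" if "t \<noteq> 0" "u \<noteq> 0"
    using that s(1) by (intro closed torus gK)
  ultimately show ?thesis
    by metis
qed

lemma zariski_dense_SL2_if_torus_powers_and_generic:
  fixes H :: "('k::alg_closed_field^2^2) set"
  assumes closed: "\<And>u v. u \<in> H \<Longrightarrow> v \<in> H \<Longrightarrow> u ** v \<in> H"
    and l: "l \<noteq> 0" "\<And>n. n > 0 \<Longrightarrow> l ^ n \<noteq> 1" and powers: "\<And>n. diag2 (l ^ n) \<in> H"
    and gH: "g \<in> H" "adj2 g \<in> H" and dg: "det g = 1" and g: "all_entries_nonzero g"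
    and inf: "infinite (UNIV :: 'k set)"
  shows "zariski_dense_SL2 H"
proof -
  have K_closed: "u ** v \<in> zariski_closure H"
    if "u \<in> zariski_closure H" "v \<in> zariski_closure H" for u v
    using zariski_closure_mult_closed[OF closed that] .
  have "range (\<lambda>n. diag2 (l ^ n)) \<subseteq> zariski_closure H"
    using powers subset_zariski_closure by blast
  then have torus: "diag2 t \<in> zariski_closure H" if "t \<noteq> 0" for t
    using diag2_in_zariski_closure_powers[OF l that] zariski_closure_subset_closure by blast
  have "{X. det X = 1 \<and> all_entries_nonzero X} \<subseteq> zariski_closure H"
    using all_entries_nonzero_in_torus_double_coset[OF K_closed torus _ _ dg g]
      gH subset_zariski_closure by blast
  then show ?thesis
    unfolding zariski_dense_SL2_iff_closure
    using SL2_subset_zariski_closure_all_entries_nonzero[OF inf] zariski_closure_subset_closure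
    by blast
qed

section \<open>Subgroups generated by two traceless elements\<close>

definition pencil2 :: "'a::comm_ring_1 \<Rightarrow> 'a \<Rightarrow> 'a^2^2 \<Rightarrow> 'a^2^2" where
  "pencil2 \<alpha> \<beta> Y = mat2 (\<alpha> + \<beta> * Y$1$1) (\<beta> * Y$1$2) (\<beta> * Y$2$1) (\<alpha> + \<beta> * Y$2$2)"

lemma pencil2_1_0: "pencil2 1 0 Y = mat 1"
  by (simp add: pencil2_def mat_1_eq_mat2)

text \<open>By Cayley-Hamilton, \<open>Y\<^sup>2 = trace Y \<cdot> Y - 1\<close>, so the pencil \<open>\<alpha> + \<beta> Y\<close> is closed under products.\<close>
lemma pencil2_mult:
  fixes Y :: "'a::comm_ring_1^2^2"
  assumes "det Y = 1"
  shows "pencil2 \<alpha> \<beta> Y ** pencil2 \<gamma> \<delta> Y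
    = pencil2 (\<alpha> * \<gamma> - \<beta> * \<delta>) (\<alpha> * \<delta> + \<beta> * \<gamma> + \<beta> * \<delta> * trace2 Y) Y"
proof (cases Y rule: mat2_cases)
  case (1 p q r w)
  then have "p * w - q * r = 1"
    using assms by simp
  then show ?thesis
    unfolding 1 by (simp add: pencil2_def trace2_def mat2_eq_iff algebra_simps)
qed

lemma pencil2_commute: "pencil2 \<alpha> \<beta> Y ** Y = Y ** pencil2 \<alpha> \<beta> Y"
  by (cases Y rule: mat2_cases) (simp add: pencil2_def mat2_eq_iff algebra_simps)

lemma scalar2_pencil2: "scalar2 Y \<Longrightarrow> scalar2 (pencil2 \<alpha> \<beta> Y)"
  by (simp add: pencil2_def scalar2_def)

definition pencil2_dihedral :: "'a::comm_ring_1^2^2 \<Rightarrow> 'a^2^2 \<Rightarrow> ('a^2^2) set" where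
  "pencil2_dihedral x y = {pencil2 \<alpha> \<beta> y | \<alpha> \<beta>. True} \<union> {pencil2 \<alpha> \<beta> y ** x | \<alpha> \<beta>. True}"

definition trace_commutator2 :: "'a::comm_ring_1^2^2 \<Rightarrow> 2 \<Rightarrow> 2 \<Rightarrow> 'a^2^2 \<Rightarrow> 'a" where
  "trace_commutator2 z i j X = trace2 X * ((X ** z)$i$j - (z ** X)$i$j)"

lemma trace_commutator2_matrix_poly_fun: "trace_commutator2 z i j \<in> matrix_poly_fun"
  unfolding trace_commutator2_def trace2_def
  by (intro matrix_poly_fun.intros matrix_poly_fun_diff matrix_poly_fun_mult_entry)

lemma exists_SL2_trace_commutator2_nonzero:
  fixes z :: "'k::field^2^2"
  assumes "\<not> scalar2 z" "infinite (UNIV :: 'k set)"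
  obtains X i j where "det X = 1" "trace_commutator2 z i j X \<noteq> 0"
proof -
  have "finite ({0} \<union> {t::'k. t ^ 4 = 1})"
    using finite_roots_of_unity[of 4] by simp
  then obtain t :: 'k where t: "t \<notin> {0} \<union> {t. t ^ 4 = 1}"
    using ex_new_if_finite[OF assms(2)] by blast
  then have tnz: "t \<noteq> 0" and "t ^ 4 \<noteq> 1"
    by simp_all
  moreover have "(t + inverse t) * (t - inverse t) * t^2 = t ^ 4 - 1"
    using right_inverse[OF tnz] by algebra
  ultimately have "(t + inverse t) * (t - inverse t) \<noteq> 0"
    by auto
  then have plus: "t + inverse t \<noteq> 0" and minus: "t - inverse t \<noteq> 0"
    by auto
  obtain p q r w where z: "z = mat2 p q r w"
    by (rule mat2_cases)
  consider "q \<noteq> 0" | "r \<noteq> 0" | "q = 0" "r = 0" "p \<noteq> w"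
    using assms(1) z by (auto simp: scalar2_def)
  then show ?thesis
  proof cases
    case 1
    have "trace_commutator2 z 1 2 (diag2 t) = (t + inverse t) * (t - inverse t) * q"
      by (simp add: z diag2_def trace_commutator2_def trace2_def algebra_simps)
    then show ?thesis
      using tnz plus minus 1 by (intro that[of "diag2 t" 1 2]) simp_all
  next
    case 2
    have "trace_commutator2 z 2 1 (diag2 t) = - ((t + inverse t) * (t - inverse t) * r)"
      by (simp add: z diag2_def trace_commutator2_def trace2_def algebra_simps)
    then show ?thesis
      using tnz plus minus 2 by (intro that[of "diag2 t" 2 1]) simp_all
  next
    case 3
    have "trace_commutator2 z 1 2 (mat2 t 1 0 (inverse t)) = (t + inverse t) * (w - p)"
      by (simp add: z 3 trace_commutator2_def trace2_def algebra_simps)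
    then show ?thesis
      using tnz plus 3 by (intro that[of "mat2 t 1 0 (inverse t)" 1 2]) simp_all
  qed
qed

context
  fixes x w :: "'k::field^2^2"
  assumes x: "det x = 1" "trace2 x = 0" and w: "det w = 1" "trace2 w = 0"
begin

text \<open>With \<open>x\<^sup>2 = w\<^sup>2 = -1\<close>, conjugation by \<open>x\<close> inverts \<open>y = x w\<close>, and \<open>y\<^sup>-\<^sup>1 = trace y - y\<close>.\<close>
lemma traceless_pair_identities:
  shows "x ** pencil2 \<gamma> \<delta> (x ** w) = pencil2 (\<gamma> + \<delta> * trace2 (x ** w)) (-\<delta>) (x ** w) ** x"
    and "x ** x = pencil2 (-1) 0 (x ** w)"
    and "w = pencil2 (- trace2 (x ** w)) 1 (x ** w) ** x"
    and "adj2 x = pencil2 (-1) 0 (x ** w) ** x"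
    and "adj2 w = pencil2 (trace2 (x ** w)) (-1) (x ** w) ** x"
    and "trace2 (pencil2 \<alpha> \<beta> (x ** w) ** x) = 0"
proof -
  obtain a b c where x_eq: "x = mat2 a b c (-a)" and hx: "-a*a - b*c = 1"
    using x by (cases x rule: mat2_cases) (simp add: trace2_def add_eq_0_iff)
  obtain e f g where w_eq: "w = mat2 e f g (-e)" and hw: "-e*e - f*g = 1"
    using w by (cases w rule: mat2_cases) (simp add: trace2_def add_eq_0_iff)
  show "x ** pencil2 \<gamma> \<delta> (x ** w) = pencil2 (\<gamma> + \<delta> * trace2 (x ** w)) (-\<delta>) (x ** w) ** x"
    unfolding x_eq w_eq using hx hw
    by (simp add: pencil2_def trace2_def mat2_eq_iff; intro conjI; ((simp add: algebra_simps; fail) | algebra))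
  show "x ** x = pencil2 (-1) 0 (x ** w)"
    unfolding x_eq w_eq using hx hw
    by (simp add: pencil2_def trace2_def mat2_eq_iff; intro conjI; ((simp add: algebra_simps; fail) | algebra))
  show "w = pencil2 (- trace2 (x ** w)) 1 (x ** w) ** x"
    unfolding x_eq w_eq using hx hw
    by (simp add: pencil2_def trace2_def mat2_eq_iff; intro conjI; ((simp add: algebra_simps; fail) | algebra))
  show "adj2 x = pencil2 (-1) 0 (x ** w) ** x"
    unfolding x_eq w_eq using hx hw
    by (simp add: pencil2_def trace2_def mat2_eq_iff; intro conjI; ((simp add: algebra_simps; fail) | algebra))
  show "adj2 w = pencil2 (trace2 (x ** w)) (-1) (x ** w) ** x"
    unfolding x_eq w_eq using hx hw
    by (simp add: pencil2_def trace2_def mat2_eq_iff; intro conjI; ((simp add: algebra_simps; fail) | algebra))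
  show "trace2 (pencil2 \<alpha> \<beta> (x ** w) ** x) = 0"
    unfolding x_eq w_eq by (simp add: pencil2_def trace2_def algebra_simps)
qed

lemma generate_traceless_pair_subset: "generate SL2 {x, w} \<subseteq> pencil2_dihedral x (x ** w)"
proof
  define y where "y = x ** w"
  have dy: "det y = 1"
    using x w by (simp add: y_def det_mul)
  note ids = traceless_pair_identities[folded y_def]
  have pencil: "pencil2 \<alpha> \<beta> y \<in> pencil2_dihedral x y"
    and pencil_x: "pencil2 \<alpha> \<beta> y ** x \<in> pencil2_dihedral x y" for \<alpha> \<beta>
    by (auto simp: pencil2_dihedral_def)
  fix X
  assume "X \<in> generate SL2 {x, w}"
  then show "X \<in> pencil2_dihedral x (x ** w)"
    unfolding y_def[symmetric]
  proof induction
    case one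
    show ?case
      using pencil[of 1 0] by (simp add: pencil2_1_0)
  next
    case (incl h)
    then show ?case
      using pencil_x[of 1 0] pencil_x ids(3) by (auto simp: pencil2_1_0)
  next
    case (inv h)
    then show ?case
      using pencil_x x w ids(4,5) by (auto simp: inv_SL2)
  next
    case (eng u v)
    from eng.IH(1) obtain \<alpha> \<beta> where u: "u = pencil2 \<alpha> \<beta> y \<or> u = pencil2 \<alpha> \<beta> y ** x"
      unfolding pencil2_dihedral_def by blast
    from eng.IH(2) obtain \<gamma> \<delta> where v: "v = pencil2 \<gamma> \<delta> y \<or> v = pencil2 \<gamma> \<delta> y ** x"
      unfolding pencil2_dihedral_def by blast
    have "(pencil2 \<alpha> \<beta> y ** x) ** pencil2 \<gamma> \<delta> y
        = (pencil2 \<alpha> \<beta> y ** pencil2 (\<gamma> + \<delta> * trace2 y) (-\<delta>) y) ** x"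
      by (simp only: ids(1) flip: matrix_mul_assoc)
    moreover have "(pencil2 \<alpha> \<beta> y ** x) ** (pencil2 \<gamma> \<delta> y ** x)
        = (pencil2 \<alpha> \<beta> y ** pencil2 (\<gamma> + \<delta> * trace2 y) (-\<delta>) y) ** pencil2 (-1) 0 y"
    proof -
      have "(pencil2 \<alpha> \<beta> y ** x) ** (pencil2 \<gamma> \<delta> y ** x)
          = pencil2 \<alpha> \<beta> y ** ((x ** pencil2 \<gamma> \<delta> y) ** x)"
        by (simp only: matrix_mul_assoc)
      also have "\<dots> = pencil2 \<alpha> \<beta> y ** (pencil2 (\<gamma> + \<delta> * trace2 y) (-\<delta>) y ** (x ** x))"
        by (simp only: ids(1) flip: matrix_mul_assoc)
      finally show ?thesis
        by (simp only: ids(2) matrix_mul_assoc)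
    qed
    moreover have "pencil2 \<alpha> \<beta> y ** (pencil2 \<gamma> \<delta> y ** x) = (pencil2 \<alpha> \<beta> y ** pencil2 \<gamma> \<delta> y) ** x"
      by (simp only: matrix_mul_assoc)
    ultimately show ?case
      using u v pencil pencil_x by (auto simp: pencil2_mult[OF dy])
  qed
qed

text \<open>The polynomial \<open>trace X \<cdot> [X, z]\<^sub>i\<^sub>j\<close> vanishes on the pencil (which commutes with \<open>z\<close>) and
  on its coset by \<open>x\<close> (which is traceless).\<close>
lemma trace_commutator2_vanishes_on_traceless_pair:
  assumes "X \<in> generate SL2 {x, w}"
  shows "trace_commutator2 (if scalar2 (x ** w) then x else x ** w) i j X = 0"
proof -
  consider \<alpha> \<beta> where "X = pencil2 \<alpha> \<beta> (x ** w)" | \<alpha> \<beta> where "X = pencil2 \<alpha> \<beta> (x ** w) ** x"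
    using generate_traceless_pair_subset assms unfolding pencil2_dihedral_def by blast
  then show ?thesis
  proof cases
    case 1
    have "X ** x = x ** X" if "scalar2 (x ** w)"
      using scalar2_commute[OF scalar2_pencil2[OF that]] 1 by simp
    moreover have "X ** (x ** w) = (x ** w) ** X"
      using pencil2_commute 1 by simp
    ultimately show ?thesis
      by (simp add: trace_commutator2_def)
  next
    case 2
    then show ?thesis
      by (simp add: trace_commutator2_def traceless_pair_identities(6))
  qed
qed

lemma not_zariski_dense_traceless_pair:
  assumes "\<not> scalar2 x" "infinite (UNIV :: 'k set)"
  shows "\<not> zariski_dense_SL2 (generate SL2 {x, w})"
proof -
  define z where "z = (if scalar2 (x ** w) then x else x ** w)"
  have "\<not> scalar2 z"
    using assms(1) by (simp add: z_def)
  then obtain X i j where X: "det X = 1" "trace_commutator2 z i j X \<noteq> 0"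
    using exists_SL2_trace_commutator2_nonzero assms(2) by blast
  have "\<forall>Y\<in>generate SL2 {x, w}. trace_commutator2 z i j Y = 0"
    using trace_commutator2_vanishes_on_traceless_pair by (simp add: z_def)
  then have "\<forall>Y\<in>carrier SL2. trace_commutator2 z i j Y = 0"
    if "zariski_dense_SL2 (generate SL2 {x, w})"
    using that trace_commutator2_matrix_poly_fun unfolding zariski_dense_SL2_def by blast
  then show ?thesis
    using X by auto
qed

end

section \<open>Dense two-generator subgroups\<close>

lemma generate_SL2_mult_closed:
  "u \<in> generate SL2 S \<Longrightarrow> v \<in> generate SL2 S \<Longrightarrow> u ** v \<in> generate SL2 S"
  using generate.eng[of u SL2 S v] by simp

lemma adj2_in_generate_SL2: "x \<in> S \<Longrightarrow> det x = 1 \<Longrightarrow> adj2 x \<in> generate SL2 S"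
  using generate.inv[of x S SL2] inv_SL2[of x] by simp

text \<open>Take \<open>x\<^sub>1 = (a, 1; c, \<tau>\<^sub>1 - a)\<close> and \<open>x\<^sub>2 = x\<^sub>1\<^sup>-\<^sup>1 diag(l, 1/l)\<close>; the trace condition on \<open>x\<^sub>2\<close>
  reads \<open>(1 - l\<^sup>2) a = l (\<tau>\<^sub>2 - \<tau>\<^sub>1 l)\<close>, and the hypotheses on \<open>l\<close> make \<open>a\<close>, \<open>\<tau>\<^sub>1 - a\<close> and \<open>c\<close> nonzero.\<close>
lemma exists_pair_with_product_diag2:
  fixes \<tau>1 \<tau>2 l :: "'k::field"
  assumes l: "l \<noteq> 0" "l^2 \<noteq> 1" "\<tau>2 \<noteq> \<tau>1 * l" "\<tau>1 \<noteq> \<tau>2 * l"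
    and Q: "(1 - l^2)^2 \<noteq> l * (\<tau>2 - \<tau>1 * l) * (\<tau>1 - \<tau>2 * l)"
  obtains x1 x2 where "x1 \<in> SL2_trace_class \<tau>1" "x2 \<in> SL2_trace_class \<tau>2"
    "x1 ** x2 = diag2 l" "all_entries_nonzero x1"
proof -
  define m where "m = 1 - l^2"
  have mnz: "m \<noteq> 0"
    using l(2) by (simp add: m_def)
  define a where "a = l * (\<tau>2 - \<tau>1 * l) / m"
  have am: "a * m = l * (\<tau>2 - \<tau>1 * l)"
    using mnz by (simp add: a_def)
  have bm: "(\<tau>1 - a) * m = \<tau>1 - \<tau>2 * l"
    using am unfolding m_def by algebra
  define c where "c = a * (\<tau>1 - a) - 1"
  define x1 where "x1 = mat2 a 1 c (\<tau>1 - a)"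
  define x2 where "x2 = adj2 x1 ** diag2 l"
  have d1: "det x1 = 1"
    by (simp add: x1_def c_def)
  have x1: "x1 \<in> SL2_trace_class \<tau>1"
    using d1 by (simp add: SL2_trace_class_def x1_def trace2_def scalar2_def)
  have "trace2 x2 = (\<tau>1 - a) * l + a * inverse l"
    by (simp add: x2_def x1_def diag2_def trace2_def)
  also have "\<dots> = \<tau>2"
    using right_inverse[OF l(1)] am unfolding m_def by algebra
  moreover have "det x2 = 1"
    using d1 l(1) by (simp add: x2_def det_mul)
  moreover have "x2 $ 1 $ 2 \<noteq> 0"
    using l(1) by (simp add: x2_def x1_def diag2_def)
  ultimately have x2: "x2 \<in> SL2_trace_class \<tau>2"
    by (simp add: SL2_trace_class_def scalar2_def)
  have "x1 ** x2 = diag2 l"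
    unfolding x2_def by (simp add: matrix_mul_assoc mult_adj2(1)[OF d1])
  moreover have "a \<noteq> 0"
    using am l(1,3) by auto
  moreover have "\<tau>1 - a \<noteq> 0"
    using bm l(4) by auto
  moreover have "c \<noteq> 0"
  proof
    assume "c = 0"
    then have "a * (\<tau>1 - a) = 1"
      by (simp add: c_def)
    then have "(a * m) * ((\<tau>1 - a) * m) = m * m"
      by algebra
    then have "l * (\<tau>2 - \<tau>1 * l) * (\<tau>1 - \<tau>2 * l) = m^2"
      by (simp only: am bm mult.assoc power2_eq_square)
    then show False
      using Q by (simp add: m_def)
  qed
  ultimately show ?thesis
    using that x1 x2 by (simp add: all_entries_nonzero_def x1_def)
qed

lemma finite_solutions_linear:
  assumes "\<tau>1 \<noteq> 0 \<or> \<tau>2 \<noteq> 0"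
  shows "finite {z::'k::field. \<tau>2 = \<tau>1 * z}"
proof (cases "\<tau>1 = 0")
  case False
  then have "{z::'k. \<tau>2 = \<tau>1 * z} \<subseteq> {\<tau>2 / \<tau>1}"
    by (auto simp: field_simps)
  then show ?thesis
    using finite_subset by blast
qed (use assms in simp)

text \<open>Each condition excludes only finitely many \<open>l\<close>, and the roots of unity are countable.\<close>
lemma exists_generic_diagonal_parameter:
  fixes \<tau>1 \<tau>2 :: "'k::field"
  assumes unc: "uncountable (UNIV :: 'k set)" and nz: "\<tau>1 \<noteq> 0 \<or> \<tau>2 \<noteq> 0"
  obtains l where "l \<noteq> 0" "\<And>n. n > 0 \<Longrightarrow> l ^ n \<noteq> 1" "\<tau>2 \<noteq> \<tau>1 * l" "\<tau>1 \<noteq> \<tau>2 * l"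
    "(1 - l^2)^2 \<noteq> l * (\<tau>2 - \<tau>1 * l) * (\<tau>1 - \<tau>2 * l)"
proof -
  define Q where "Q = [:1, - (\<tau>1 * \<tau>2), \<tau>1 * \<tau>1 + \<tau>2 * \<tau>2 - 2, - (\<tau>1 * \<tau>2), 1:]"
  have poly_Q: "poly Q z = (1 - z^2)^2 - z * (\<tau>2 - \<tau>1 * z) * (\<tau>1 - \<tau>2 * z)" for z
    unfolding Q_def by (simp add: power2_eq_square) algebra
  have "Q \<noteq> 0"
    by (simp add: Q_def)
  define bad where "bad = {z::'k. \<exists>n>0. z ^ n = 1} \<union> {0} \<union> {z. \<tau>2 = \<tau>1 * z}
    \<union> {z. \<tau>1 = \<tau>2 * z} \<union> {z. poly Q z = 0}"
  have "countable bad"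
    unfolding bad_def using nz
    by (intro countable_Un countable_roots_of_unity countable_finite finite_solutions_linear
        poly_roots_finite[OF \<open>Q \<noteq> 0\<close>]) auto
  then obtain l where l: "l \<notin> bad"
    using unc countable_subset[of UNIV bad] by blast
  moreover have "l ^ n \<noteq> 1" if "n > 0" for n
    using l that unfolding bad_def by blast
  ultimately show ?thesis
    by (intro that) (auto simp: bad_def poly_Q)
qed

lemma exists_zariski_dense_pair:
  fixes \<tau>1 \<tau>2 :: "'k::alg_closed_field"
  assumes unc: "uncountable (UNIV :: 'k set)" and nz: "\<tau>1 \<noteq> 0 \<or> \<tau>2 \<noteq> 0"
  shows "\<exists>x1\<in>SL2_trace_class \<tau>1. \<exists>x2\<in>SL2_trace_class \<tau>2. zariski_dense_SL2 (generate SL2 {x1, x2})"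
proof -
  obtain l where l: "l \<noteq> 0" "\<And>n. n > 0 \<Longrightarrow> l ^ n \<noteq> 1" "\<tau>2 \<noteq> \<tau>1 * l" "\<tau>1 \<noteq> \<tau>2 * l"
    "(1 - l^2)^2 \<noteq> l * (\<tau>2 - \<tau>1 * l) * (\<tau>1 - \<tau>2 * l)"
    using exists_generic_diagonal_parameter[OF unc nz] by metis
  have "l^2 \<noteq> 1"
    using l(2)[of 2] by simp
  then obtain x1 x2 where x: "x1 \<in> SL2_trace_class \<tau>1" "x2 \<in> SL2_trace_class \<tau>2"
    and prod: "x1 ** x2 = diag2 l" and x1: "all_entries_nonzero x1"
    using exists_pair_with_product_diag2[OF l(1) _ l(3-5)] by blast
  define H where "H = generate SL2 {x1, x2}"
  have closed: "u ** v \<in> H" if "u \<in> H" "v \<in> H" for u v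
    using generate_SL2_mult_closed that unfolding H_def .
  have x12H: "x1 \<in> H" "x2 \<in> H" "adj2 x1 \<in> H"
    using x by (auto simp: H_def SL2_trace_class_def intro: generate.incl adj2_in_generate_SL2)
  have powers: "diag2 (l ^ n) \<in> H" for n
  proof (induction n)
    case 0
    show ?case
      using generate.one[of SL2 "{x1, x2}"] by (simp add: H_def)
  next
    case (Suc n)
    then have "diag2 (l ^ n) ** (x1 ** x2) \<in> H"
      using closed x12H by blast
    then show ?case
      by (simp add: prod diag2_mult mult.commute)
  qed
  have "zariski_dense_SL2 H"
    using x x1 uncountable_infinite[OF unc]
    by (intro zariski_dense_SL2_if_torus_powers_and_generic[OF closed l(1,2) powers x12H(1,3)])
      (auto simp: SL2_trace_class_def)
  then show ?thesis
    using x unfolding H_def by blast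
qed

theorem lemma3p10:
  fixes C1 C2 :: "('k::alg_closed_field ^2^2) set"
  assumes "uncountable (UNIV :: 'k set)"
    and "is_conj_class SL2 C1" and "is_conj_class SL2 C2"
    and "\<not> C1 \<subseteq> grp_center SL2" and "\<not> C2 \<subseteq> grp_center SL2"
  shows "(\<exists>x1 \<in> C1. \<exists>x2 \<in> C2. zariski_dense_SL2 (generate SL2 {x1, x2}))
     \<longleftrightarrow> \<not> (involution_mod_center_class SL2 C1 \<and> involution_mod_center_class SL2 C2)"
proof -
  obtain \<tau>1 \<tau>2 where C: "C1 = SL2_trace_class \<tau>1" "C2 = SL2_trace_class \<tau>2"
    using noncentral_conj_class_SL2 assms(2-5) by metis
  have "(\<exists>x1 \<in> C1. \<exists>x2 \<in> C2. zariski_dense_SL2 (generate SL2 {x1, x2})) \<longleftrightarrow> \<tau>1 \<noteq> 0 \<or> \<tau>2 \<noteq> 0"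
  proof
    assume "\<exists>x1 \<in> C1. \<exists>x2 \<in> C2. zariski_dense_SL2 (generate SL2 {x1, x2})"
    then show "\<tau>1 \<noteq> 0 \<or> \<tau>2 \<noteq> 0"
      using not_zariski_dense_traceless_pair uncountable_infinite[OF assms(1)]
      by (auto simp: C SL2_trace_class_def)
  next
    assume "\<tau>1 \<noteq> 0 \<or> \<tau>2 \<noteq> 0"
    then show "\<exists>x1 \<in> C1. \<exists>x2 \<in> C2. zariski_dense_SL2 (generate SL2 {x1, x2})"
      unfolding C by (rule exists_zariski_dense_pair[OF assms(1)])
  qed
  then show ?thesis
    by (simp add: C involution_mod_center_class_SL2_trace_class_iff)
qed

end
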